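(* Let $V$ be a vector space over a field $\mathbb{K}$, $F$ a bilinear form on $V$, $p\ge2$ and $x_1,\dots,x_p\in V$. Then $$\lambda_F(x_1\otimes\cdots\otimes x_p)=x_1\otimes\cdots\otimes x_p+\sum_{k=1}^{[p/2]}\ \sum_{(i_1,j_1,\dots,i_k,j_k)}(-1)^{\sigma}F(x_{i_1},x_{j_1})\cdots F(x_{i_k},x_{j_k})\,X_{(i_1,\dots,j_k)},$$ where $[p/2]$ is the floor of $p/2$; the inner sum is over pairwise distinct indices $i_1,j_1,\dots,i_k,j_k\in\{1,\dots,p\}$ with $i_l<j_l$ for each $l$ and $i_1<i_2<\cdots<i_k$; $X_{(i_1,\dots,j_k)}$ denotes $x_1\otimes\cdots\otimes x_p$ with the factors $x_{i_1},x_{j_1},\dots,x_{i_k},x_{j_k}$ omitted; and $(-1)^\sigma$ is the sign of the permutation of $\{1,\dots,p\}$ given by the sequence $i_1,j_1,\dots,i_k,j_k$ followed by the remaining indices in increasing order.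
   Context: $\mathcal{T}(V)$ is the tensor algebra of $V$. For $f\in V^*$, $i_f$ is the unique linear map on $\mathcal{T}(V)$ with $i_f(1)=0$ and $i_f(x\otimes u)=f(x)u-x\otimes i_f(u)$ ($x\in V$); $i_x^F:=i_{f_x}$ with $f_x(y)=F(x,y)$. $\Lambda_F:\mathcal{T}(V)\to\mathrm{End}(\mathcal{T}(V))$ is the unique unital algebra homomorphism with $\Lambda_F(x)(u)=x\otimes u+i_x^F(u)$ for $x\in V$, and $\lambda_F(u):=\Lambda_F(u)(1)$. *)

theory Defs
  imports "HOL-Library.Poly_Mapping" "HOL-Combinatorics.Permutations"
begin

text \<open>Model: V is the K-vector space 'b \<Rightarrow>0 'k (finitely supported coordinate vectors
w.r.t. the basis indexed by 'b); its tensor algebra T(V) is 'b list \<Rightarrow>0 'k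
(a word b1...bn stands for e_b1 (x) ... (x) e_bn).\<close>

type_synonym ('b,'k) vec = "'b \<Rightarrow>\<^sub>0 'k"
type_synonym ('b,'k) tens = "'b list \<Rightarrow>\<^sub>0 'k"

definition vsmult :: "'k::field \<Rightarrow> ('a \<Rightarrow>\<^sub>0 'k) \<Rightarrow> ('a \<Rightarrow>\<^sub>0 'k)" where
  "vsmult a v = Poly_Mapping.map (\<lambda>c. a * c) v"

definition lin_map :: "('k \<Rightarrow> 'u \<Rightarrow> 'u) \<Rightarrow> ('k \<Rightarrow> 'w \<Rightarrow> 'w) \<Rightarrow> ('u::plus \<Rightarrow> 'w::plus) \<Rightarrow> bool" where
  "lin_map s1 s2 g \<longleftrightarrow> (\<forall>u v. g (u + v) = g u + g v) \<and> (\<forall>a u. g (s1 a u) = s2 a (g u))"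

definition bilinear_form :: "(('b,'k::field) vec \<Rightarrow> ('b,'k) vec \<Rightarrow> 'k) \<Rightarrow> bool" where
  "bilinear_form F \<longleftrightarrow> (\<forall>y. lin_map vsmult (*) (\<lambda>x. F x y)) \<and> (\<forall>x. lin_map vsmult (*) (F x))"

definition tone :: "('b,'k::field) tens" where
  "tone = Poly_Mapping.single [] 1"

definition tprod :: "('b,'k::field) tens \<Rightarrow> ('b,'k) tens \<Rightarrow> ('b,'k) tens" where
  "tprod s t = (\<Sum>u\<in>Poly_Mapping.keys s. \<Sum>w\<in>Poly_Mapping.keys t. Poly_Mapping.single (u @ w) (Poly_Mapping.lookup s u * Poly_Mapping.lookup t w))"

definition emb :: "('b,'k::field) vec \<Rightarrow> ('b,'k) tens" where
  "emb x = (\<Sum>b\<in>Poly_Mapping.keys x. Poly_Mapping.single [b] (Poly_Mapping.lookup x b))"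

definition tens_list :: "('b,'k::field) vec list \<Rightarrow> ('b,'k) tens" where
  "tens_list xs = foldr (\<lambda>x t. tprod (emb x) t) xs tone"

definition iop :: "(('b,'k::field) vec \<Rightarrow> 'k) \<Rightarrow> ('b,'k) tens \<Rightarrow> ('b,'k) tens" where
  "iop f = (THE g. lin_map vsmult vsmult g \<and> g tone = 0 \<and>
      (\<forall>x u. g (tprod (emb x) u) = vsmult (f x) u - tprod (emb x) (g u)))"

definition iF :: "(('b,'k::field) vec \<Rightarrow> ('b,'k) vec \<Rightarrow> 'k) \<Rightarrow> ('b,'k) vec \<Rightarrow> ('b,'k) tens \<Rightarrow> ('b,'k) tens" where
  "iF F x = iop (\<lambda>y. F x y)"

definition LambdaF :: "(('b,'k::field) vec \<Rightarrow> ('b,'k) vec \<Rightarrow> 'k) \<Rightarrow> ('b,'k) tens \<Rightarrow> ('b,'k) tens \<Rightarrow> ('b,'k) tens" where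
  "LambdaF F = (THE L. (\<forall>u. lin_map vsmult vsmult (L u)) \<and>
      (\<forall>s t u. L (s + t) u = L s u + L t u) \<and> (\<forall>a s u. L (vsmult a s) u = vsmult a (L s u)) \<and>
      L tone = id \<and> (\<forall>s t. L (tprod s t) = L s \<circ> L t) \<and>
      (\<forall>x u. L (emb x) u = tprod (emb x) u + iF F x u))"

definition lambdaF :: "(('b,'k::field) vec \<Rightarrow> ('b,'k) vec \<Rightarrow> 'k) \<Rightarrow> ('b,'k) tens \<Rightarrow> ('b,'k) tens" where
  "lambdaF F u = LambdaF F u tone"

text \<open>Index tuples (i1,j1,...,ik,jk), as lists of pairs.\<close>
definition pair_seq :: "(nat \<times> nat) list \<Rightarrow> nat list" where
  "pair_seq ps = concat (List.map (\<lambda>(i,j). [i,j]) ps)"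

definition pairings :: "nat \<Rightarrow> nat \<Rightarrow> (nat \<times> nat) list set" where
  "pairings p k = {ps. length ps = k \<and> distinct (pair_seq ps) \<and>
      (\<forall>(i,j)\<in>set ps. 1 \<le> i \<and> i < j \<and> j \<le> p) \<and> sorted_wrt (<) (List.map fst ps)}"

definition pair_perm :: "nat \<Rightarrow> (nat \<times> nat) list \<Rightarrow> nat \<Rightarrow> nat" where
  "pair_perm p ps = (\<lambda>l. if 1 \<le> l \<and> l \<le> p
      then (pair_seq ps @ filter (\<lambda>m. m \<notin> set (pair_seq ps)) [1..<p+1]) ! (l - 1) else l)"

end

theory Submission
  imports Defs
begin

text \<open>Because \<open>\<Lambda>\<^sub>F\<close> is multiplicative,
  \<open>\<lambda>\<^sub>F(x\<^sub>1 \<otimes> \<dots> \<otimes> x\<^sub>p) = x\<^sub>1 \<otimes> \<lambda>\<^sub>F(x\<^sub>2 \<otimes> \<dots> \<otimes> x\<^sub>p) + i\<^sup>F\<^sub>x\<^sub>1(\<lambda>\<^sub>F(x\<^sub>2 \<otimes> \<dots> \<otimes> x\<^sub>p))\<close>,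
  and \<open>i\<^sup>F\<^sub>x\<^sub>1\<close> deletes one factor \<open>x\<^sub>j\<close>, sitting at position \<open>m\<close> (counted from 0), with the
  coefficient \<open>(-1)\<^sup>m F(x\<^sub>1, x\<^sub>j)\<close>. By induction on \<open>p\<close>, the pairings of \<open>{1..p}\<close> in which
  1 is unpaired come from the first summand and those containing \<open>(1, j)\<close> from the second.
  The signs match: in the sequence \<open>i\<^sub>1 j\<^sub>1 \<dots> i\<^sub>k j\<^sub>k\<close> followed by the unpaired indices,
  moving 1 to the front past the \<open>2k\<close> paired indices is an even permutation, and moving \<open>j\<close>
  there past \<open>2k + m\<close> indices contributes exactly \<open>(-1)\<^sup>m\<close>.

  The operators \<open>i\<^sub>f\<close> and \<open>\<Lambda>\<^sub>F\<close> are given by definite description; they exist and are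
  unique because a linear map on \<open>T(V)\<close> is determined by its values on the basis of words,
  where the defining identities become recursions on the word.\<close>

type_synonym ('b,'k) bform = "('b,'k) vec \<Rightarrow> ('b,'k) vec \<Rightarrow> 'k"

abbreviation basis :: "'a \<Rightarrow> ('a \<Rightarrow>\<^sub>0 'k::field)" where
  "basis a \<equiv> Poly_Mapping.single a 1"

abbreviation linear_map :: "(('a \<Rightarrow>\<^sub>0 'k::field) \<Rightarrow> ('c \<Rightarrow>\<^sub>0 'k)) \<Rightarrow> bool" where
  "linear_map \<equiv> lin_map vsmult vsmult"

abbreviation linear_functional :: "(('a \<Rightarrow>\<^sub>0 'k::field) \<Rightarrow> 'k) \<Rightarrow> bool" where
  "linear_functional \<equiv> lin_map vsmult (*)"

lemma lookup_vsmult [simp]: "Poly_Mapping.lookup (vsmult a v) k = a * Poly_Mapping.lookup v k"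
  by (simp add: vsmult_def map.rep_eq when_def)

lemma vsmult_add_right: "vsmult a (u + v) = vsmult a u + vsmult a v"
  by (rule poly_mapping_eqI) (simp add: lookup_add algebra_simps)

lemma vsmult_add_left: "vsmult (a + b) v = vsmult a v + vsmult b v"
  by (rule poly_mapping_eqI) (simp add: lookup_add algebra_simps)

lemma vsmult_diff_right: "vsmult a (u - v) = vsmult a u - vsmult a v"
  by (rule poly_mapping_eqI) (simp add: lookup_minus algebra_simps)

lemma vsmult_vsmult [simp]: "vsmult a (vsmult b v) = vsmult (a * b) v"
  by (rule poly_mapping_eqI) (simp add: algebra_simps)

lemma vsmult_one [simp]: "vsmult 1 v = v"
  by (rule poly_mapping_eqI) simp

lemma vsmult_zero_left [simp]: "vsmult 0 v = 0"
  by (rule poly_mapping_eqI) simp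

lemma vsmult_zero_right [simp]: "vsmult a 0 = 0"
  by (rule poly_mapping_eqI) simp

lemma vsmult_minus_left: "vsmult (- a) v = - vsmult a v"
  by (rule poly_mapping_eqI) simp

lemma vsmult_single: "vsmult a (Poly_Mapping.single k c) = Poly_Mapping.single k (a * c)"
  by (rule poly_mapping_eqI) (simp add: lookup_single when_def)

lemma vsmult_sum_right: "vsmult a (sum f A) = (\<Sum>i\<in>A. vsmult a (f i))"
  by (rule poly_mapping_eqI) (simp add: lookup_sum sum_distrib_left)

lemma vsmult_sum_left: "vsmult (sum f A) v = (\<Sum>i\<in>A. vsmult (f i) v)"
  by (rule poly_mapping_eqI) (simp add: lookup_sum sum_distrib_right)

lemma keys_vsmult: "Poly_Mapping.keys (vsmult a v) \<subseteq> Poly_Mapping.keys v"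
  by (auto simp: in_keys_iff)

definition lin_ext :: "('a \<Rightarrow> ('c \<Rightarrow>\<^sub>0 'k::field)) \<Rightarrow> ('a \<Rightarrow>\<^sub>0 'k) \<Rightarrow> ('c \<Rightarrow>\<^sub>0 'k)" where
  "lin_ext H s = (\<Sum>u\<in>Poly_Mapping.keys s. vsmult (Poly_Mapping.lookup s u) (H u))"

lemma lin_ext_eq_sum_superset:
  assumes "finite A" and "Poly_Mapping.keys s \<subseteq> A"
  shows "lin_ext H s = (\<Sum>u\<in>A. vsmult (Poly_Mapping.lookup s u) (H u))"
  unfolding lin_ext_def using assms by (intro sum.mono_neutral_left) (auto simp: in_keys_iff)

lemma lin_ext_add: "lin_ext H (s + t) = lin_ext H s + lin_ext H t"
proof -
  let ?A = "Poly_Mapping.keys s \<union> Poly_Mapping.keys t"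
  have "finite ?A" and "Poly_Mapping.keys (s + t) \<subseteq> ?A"
    by (simp_all add: keys_add)
  then show ?thesis
    using lin_ext_eq_sum_superset[of ?A _ H]
    by (simp add: lookup_add vsmult_add_left sum.distrib)
qed

lemma lin_ext_vsmult: "lin_ext H (vsmult a s) = vsmult a (lin_ext H s)"
  using lin_ext_eq_sum_superset[of "Poly_Mapping.keys s" "vsmult a s" H] keys_vsmult[of a s]
  by (simp add: lin_ext_def vsmult_sum_right)

lemma lin_ext_single: "lin_ext H (Poly_Mapping.single u c) = vsmult c (H u)"
  using lin_ext_eq_sum_superset[of "{u}" "Poly_Mapping.single u c" H] by simp

lemma lin_ext_basis_id: "lin_ext basis s = s"
proof (rule poly_mapping_eqI)
  fix k
  have "(\<Sum>u\<in>Poly_Mapping.keys s. Poly_Mapping.lookup s u * (if u = k then 1 else 0)) =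
      (\<Sum>u\<in>Poly_Mapping.keys s. if u = k then Poly_Mapping.lookup s k else 0)"
    by (rule sum.cong) auto
  then show "Poly_Mapping.lookup (lin_ext basis s) k = Poly_Mapping.lookup s k"
    by (simp add: lin_ext_def lookup_sum lookup_single when_def in_keys_iff)
qed

lemma lin_ext_fun_add: "lin_ext (\<lambda>u. H u + H' u) s = lin_ext H s + lin_ext H' s"
  by (simp add: lin_ext_def vsmult_add_right sum.distrib)

lemma lin_ext_fun_diff: "lin_ext (\<lambda>u. H u - H' u) s = lin_ext H s - lin_ext H' s"
  by (simp add: lin_ext_def vsmult_diff_right sum_subtractf)

lemma lin_ext_fun_vsmult: "lin_ext (\<lambda>u. vsmult a (H u)) s = vsmult a (lin_ext H s)"
  by (simp add: lin_ext_def vsmult_sum_right mult.commute)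

lemma lin_ext_swap:
  "lin_ext (\<lambda>u. lin_ext (\<lambda>w. H u w) t) s = lin_ext (\<lambda>w. lin_ext (\<lambda>u. H u w) s) t"
  unfolding lin_ext_def vsmult_sum_right by (subst sum.swap) (simp add: mult.commute)

lemma lin_map_zero:
  fixes g :: "'a::monoid_add \<Rightarrow> 'b::cancel_comm_monoid_add"
  assumes "lin_map s1 s2 g"
  shows "g 0 = 0"
proof -
  have "g (0 + 0) = g 0 + g 0"
    using assms unfolding lin_map_def by blast
  then show ?thesis by simp
qed

lemma lin_map_sum:
  fixes g :: "'a::comm_monoid_add \<Rightarrow> 'b::cancel_comm_monoid_add"
  assumes "lin_map s1 s2 g"
  shows "g (sum f A) = (\<Sum>i\<in>A. g (f i))"
  using assms lin_map_zero[OF assms]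
  by (induction A rule: infinite_finite_induct) (simp_all add: lin_map_def)

lemma linear_map_lin_ext: "linear_map (lin_ext H)"
  by (simp add: lin_map_def lin_ext_add lin_ext_vsmult)

lemma linear_map_comp_lin_ext:
  assumes "linear_map g"
  shows "g (lin_ext H s) = lin_ext (\<lambda>u. g (H u)) s"
  unfolding lin_ext_def lin_map_sum[OF assms] using assms by (simp add: lin_map_def)

lemma linear_functional_lin_ext:
  assumes "linear_functional f"
  shows "f (lin_ext H s) = (\<Sum>u\<in>Poly_Mapping.keys s. Poly_Mapping.lookup s u * f (H u))"
  unfolding lin_ext_def lin_map_sum[OF assms] using assms by (simp add: lin_map_def)

lemma linear_map_eq_lin_ext: "linear_map g \<Longrightarrow> g s = lin_ext (\<lambda>w. g (basis w)) s"
  using linear_map_comp_lin_ext[of g basis s] by (simp add: lin_ext_basis_id)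

lemma linear_map_eqI:
  "linear_map g1 \<Longrightarrow> linear_map g2 \<Longrightarrow> (\<And>w. g1 (basis w) = g2 (basis w)) \<Longrightarrow> g1 s = g2 s"
  using linear_map_eq_lin_ext[of g1 s] linear_map_eq_lin_ext[of g2 s] by simp

lemma linear_map_comp: "linear_map g1 \<Longrightarrow> linear_map g2 \<Longrightarrow> linear_map (\<lambda>u. g1 (g2 u))"
  by (simp add: lin_map_def)

lemma linear_map_add: "linear_map g1 \<Longrightarrow> linear_map g2 \<Longrightarrow> linear_map (\<lambda>u. g1 u + g2 u)"
  by (simp add: lin_map_def vsmult_add_right)

lemma linear_map_id: "linear_map (\<lambda>u. u)"
  by (simp add: lin_map_def)

lemma bilinear_form_linear_right: "bilinear_form F \<Longrightarrow> linear_functional (F x)"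
  by (simp add: bilinear_form_def)

lemma bilinear_form_linear_left: "bilinear_form F \<Longrightarrow> linear_functional (\<lambda>x. F x y)"
  by (simp add: bilinear_form_def)

lemma lin_ext_functional_vsmult:
  assumes "linear_functional f"
  shows "lin_ext (\<lambda>b. vsmult (f (basis b)) v) x = vsmult (f x) v"
  using linear_functional_lin_ext[OF assms, of basis x]
  by (simp add: lin_ext_basis_id lin_ext_def vsmult_sum_left)

lemma tprod_eq_lin_ext: "tprod s t = lin_ext (\<lambda>u. lin_ext (\<lambda>w. basis (u @ w)) t) s"
  by (simp add: tprod_def lin_ext_def vsmult_sum_right vsmult_single mult.commute)

lemma linear_tprod_left: "linear_map (\<lambda>s. tprod s t)"
  unfolding tprod_eq_lin_ext by (rule linear_map_lin_ext)

lemma linear_tprod_right: "linear_map (tprod s)"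
  unfolding tprod_eq_lin_ext lin_map_def
  by (simp add: lin_ext_add lin_ext_fun_add lin_ext_vsmult lin_ext_fun_vsmult)

lemma tprod_single: "tprod (Poly_Mapping.single u a) (Poly_Mapping.single w b) = Poly_Mapping.single (u @ w) (a * b)"
  by (simp add: tprod_eq_lin_ext lin_ext_single vsmult_single)

lemma tprod_add_right: "tprod s (t + t') = tprod s t + tprod s t'"
  using linear_tprod_right unfolding lin_map_def by blast

lemma tprod_vsmult_right: "tprod s (vsmult a t) = vsmult a (tprod s t)"
  using linear_tprod_right unfolding lin_map_def by blast

lemma tprod_sum_right: "tprod s (sum f A) = (\<Sum>i\<in>A. tprod s (f i))"
  by (rule lin_map_sum[OF linear_tprod_right])

lemma emb_eq_lin_ext: "emb x = lin_ext (\<lambda>b. basis [b]) x"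
  by (simp add: emb_def lin_ext_def vsmult_single)

lemma emb_basis: "emb (basis b) = basis [b]"
  by (simp add: emb_eq_lin_ext lin_ext_single)

lemma tprod_emb_left: "tprod (emb x) t = lin_ext (\<lambda>b. tprod (basis [b]) t) x"
  unfolding emb_eq_lin_ext by (rule linear_map_comp_lin_ext[OF linear_tprod_left])

lemma basis_Cons: "basis (b # w) = tprod (emb (basis b)) (basis w)"
  by (simp add: emb_basis tprod_single)

lemma tens_list_Nil: "tens_list [] = tone"
  by (simp add: tens_list_def)

lemma tens_list_Cons: "tens_list (x # xs) = tprod (emb x) (tens_list xs)"
  by (simp add: tens_list_def)

section \<open>The contraction \<open>i\<^sub>f\<close>\<close>

primrec contract_word :: "(('b,'k::field) vec \<Rightarrow> 'k) \<Rightarrow> 'b list \<Rightarrow> ('b,'k) tens" where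
  "contract_word f [] = 0"
| "contract_word f (b # w) = vsmult (f (basis b)) (basis w) - tprod (basis [b]) (contract_word f w)"

definition is_contraction :: "(('b,'k::field) vec \<Rightarrow> 'k) \<Rightarrow> (('b,'k) tens \<Rightarrow> ('b,'k) tens) \<Rightarrow> bool" where
  "is_contraction f g \<longleftrightarrow> linear_map g \<and> g tone = 0 \<and>
      (\<forall>x u. g (tprod (emb x) u) = vsmult (f x) u - tprod (emb x) (g u))"

lemma is_contraction_unique:
  assumes "is_contraction f g"
  shows "g = lin_ext (contract_word f)"
proof
  fix u
  have "g (basis w) = contract_word f w" for w
  proof (induction w)
    case Nil
    then show ?case using assms by (simp add: is_contraction_def tone_def)
  next
    case (Cons b w)
    have "g (basis (b # w)) = vsmult (f (basis b)) (basis w) - tprod (emb (basis b)) (g (basis w))"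
      using assms unfolding is_contraction_def basis_Cons by blast
    then show ?case using Cons by (simp add: emb_basis)
  qed
  then show "g u = lin_ext (contract_word f) u"
    using linear_map_eq_lin_ext[of g u] assms by (simp add: is_contraction_def)
qed

lemma is_contraction_lin_ext:
  assumes f: "linear_functional f"
  shows "is_contraction f (lin_ext (contract_word f))"
  unfolding is_contraction_def
proof (intro conjI allI)
  show "linear_map (lin_ext (contract_word f))"
    by (rule linear_map_lin_ext)
  show "lin_ext (contract_word f) tone = 0"
    by (simp add: tone_def lin_ext_single)
  fix x u
  let ?g1 = "\<lambda>u. lin_ext (contract_word f) (tprod (emb x) u)"
  let ?g2 = "\<lambda>u. vsmult (f x) u - tprod (emb x) (lin_ext (contract_word f) u)"
  have "linear_map ?g1"
    by (rule linear_map_comp[OF linear_map_lin_ext linear_tprod_right])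
  moreover have "linear_map ?g2"
    unfolding lin_map_def
    by (simp add: vsmult_add_right tprod_add_right lin_ext_add lin_ext_vsmult tprod_vsmult_right
        vsmult_diff_right mult.commute)
  moreover have "?g1 (basis w) = ?g2 (basis w)" for w
  proof -
    have "?g1 (basis w) = lin_ext (contract_word f) (lin_ext (\<lambda>b. basis (b # w)) x)"
      by (simp add: tprod_emb_left tprod_single)
    also have "\<dots> = lin_ext (\<lambda>b. contract_word f (b # w)) x"
      by (simp add: linear_map_comp_lin_ext[OF linear_map_lin_ext] lin_ext_single)
    also have "\<dots> = lin_ext (\<lambda>b. vsmult (f (basis b)) (basis w)) x
        - lin_ext (\<lambda>b. tprod (basis [b]) (contract_word f w)) x"
      by (simp add: lin_ext_fun_diff)
    also have "\<dots> = ?g2 (basis w)"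
      by (simp add: lin_ext_functional_vsmult[OF f] tprod_emb_left lin_ext_single)
    finally show ?thesis .
  qed
  ultimately show "?g1 u = ?g2 u"
    by (rule linear_map_eqI)
qed

lemma iop_eq_lin_ext:
  assumes "linear_functional f"
  shows "iop f = lin_ext (contract_word f)"
proof -
  have "iop f = (THE g. is_contraction f g)"
    by (simp add: iop_def is_contraction_def)
  also have "\<dots> = lin_ext (contract_word f)"
    using is_contraction_lin_ext[OF assms] is_contraction_unique by (rule the_equality)
  finally show ?thesis .
qed

lemma is_contraction_iop: "linear_functional f \<Longrightarrow> is_contraction f (iop f)"
  using iop_eq_lin_ext is_contraction_lin_ext by metis

lemma linear_iop: "linear_functional f \<Longrightarrow> linear_map (iop f)"
  using is_contraction_iop is_contraction_def by blast

lemma iop_tens_list: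
  assumes f: "linear_functional f"
  shows "iop f (tens_list ys) =
    (\<Sum>m<length ys. vsmult ((-1) ^ m * f (ys ! m)) (tens_list (take m ys @ drop (Suc m) ys)))"
proof (induction ys)
  case Nil
  then show ?case using is_contraction_iop[OF f] by (simp add: is_contraction_def tens_list_Nil)
next
  case (Cons y ys)
  have "iop f (tens_list (y # ys)) = vsmult (f y) (tens_list ys) - tprod (emb y) (iop f (tens_list ys))"
    using is_contraction_iop[OF f] unfolding is_contraction_def tens_list_Cons by blast
  also have "tprod (emb y) (iop f (tens_list ys)) =
     (\<Sum>m<length ys. vsmult ((-1) ^ m * f (ys ! m)) (tens_list (y # take m ys @ drop (Suc m) ys)))"
    by (simp add: Cons tprod_sum_right tprod_vsmult_right tens_list_Cons)
  finally show ?case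
    by (simp add: sum.lessThan_Suc_shift sum_negf[symmetric] vsmult_minus_left[symmetric]
        del: sum.lessThan_Suc)
qed

lemma contract_word_bilinear_left:
  assumes F: "bilinear_form F"
  shows "contract_word (F x) w = lin_ext (\<lambda>b. contract_word (F (basis b)) w) x"
proof (induction w)
  case Nil
  then show ?case by (simp add: lin_ext_def)
next
  case (Cons c w)
  have "lin_ext (\<lambda>b. contract_word (F (basis b)) (c # w)) x =
      lin_ext (\<lambda>b. vsmult (F (basis b) (basis c)) (basis w)) x
      - lin_ext (\<lambda>b. tprod (basis [c]) (contract_word (F (basis b)) w)) x"
    by (simp add: lin_ext_fun_diff)
  also have "\<dots> = contract_word (F x) (c # w)"
    by (simp add: lin_ext_functional_vsmult[OF bilinear_form_linear_left[OF F]]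
        linear_map_comp_lin_ext[OF linear_tprod_right] Cons)
  finally show ?case by simp
qed

section \<open>The homomorphism \<open>\<Lambda>\<^sub>F\<close>\<close>

definition Lambda_basis :: "('b,'k::field) bform \<Rightarrow> 'b \<Rightarrow> ('b,'k) tens \<Rightarrow> ('b,'k) tens" where
  "Lambda_basis F b u = tprod (basis [b]) u + iop (F (basis b)) u"

primrec Lambda_word :: "('b,'k::field) bform \<Rightarrow> 'b list \<Rightarrow> ('b,'k) tens \<Rightarrow> ('b,'k) tens" where
  "Lambda_word F [] u = u"
| "Lambda_word F (b # w) u = Lambda_basis F b (Lambda_word F w u)"

definition Lambda_lin :: "('b,'k::field) bform \<Rightarrow> ('b,'k) tens \<Rightarrow> ('b,'k) tens \<Rightarrow> ('b,'k) tens" where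
  "Lambda_lin F s u = lin_ext (\<lambda>w. Lambda_word F w u) s"

definition is_Lambda :: "('b,'k::field) bform \<Rightarrow> (('b,'k) tens \<Rightarrow> ('b,'k) tens \<Rightarrow> ('b,'k) tens) \<Rightarrow> bool" where
  "is_Lambda F L \<longleftrightarrow> (\<forall>u. linear_map (L u)) \<and>
      (\<forall>s t u. L (s + t) u = L s u + L t u) \<and> (\<forall>a s u. L (vsmult a s) u = vsmult a (L s u)) \<and>
      L tone = id \<and> (\<forall>s t. L (tprod s t) = L s \<circ> L t) \<and>
      (\<forall>x u. L (emb x) u = tprod (emb x) u + iF F x u)"

lemma linear_Lambda_word:
  assumes F: "bilinear_form F"
  shows "linear_map (Lambda_word F w)"
proof (induction w)
  case Nil
  then show ?case using linear_map_id by (simp add: fun_eq_iff)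
next
  case (Cons b w)
  have "linear_map (Lambda_basis F b)"
    unfolding Lambda_basis_def
    by (rule linear_map_add[OF linear_tprod_right linear_iop[OF bilinear_form_linear_right[OF F]]])
  then show ?case using linear_map_comp[OF _ Cons] by (simp add: fun_eq_iff)
qed

lemma Lambda_word_append: "Lambda_word F (u @ w) v = Lambda_word F u (Lambda_word F w v)"
  by (induction u) simp_all

lemma Lambda_lin_tprod:
  assumes F: "bilinear_form F"
  shows "Lambda_lin F (tprod s t) = Lambda_lin F s \<circ> Lambda_lin F t"
proof
  fix v
  have "Lambda_lin F (tprod s t) v = lin_ext (\<lambda>u. lin_ext (\<lambda>w. Lambda_word F (u @ w) v) t) s"
    unfolding Lambda_lin_def tprod_eq_lin_ext
    by (simp add: linear_map_comp_lin_ext[OF linear_map_lin_ext] lin_ext_single)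
  also have "\<dots> = (Lambda_lin F s \<circ> Lambda_lin F t) v"
    unfolding Lambda_lin_def comp_def Lambda_word_append
    by (simp add: linear_map_comp_lin_ext[OF linear_Lambda_word[OF F]])
  finally show "Lambda_lin F (tprod s t) v = (Lambda_lin F s \<circ> Lambda_lin F t) v" .
qed

lemma Lambda_lin_emb:
  assumes F: "bilinear_form F"
  shows "Lambda_lin F (emb x) u = tprod (emb x) u + iF F x u"
proof -
  note iop_F = iop_eq_lin_ext[OF bilinear_form_linear_right[OF F]]
  have "Lambda_lin F (emb x) u
      = lin_ext (\<lambda>b. tprod (basis [b]) u) x + lin_ext (\<lambda>b. iop (F (basis b)) u) x"
    unfolding Lambda_lin_def emb_eq_lin_ext
    by (simp add: linear_map_comp_lin_ext[OF linear_map_lin_ext] lin_ext_single Lambda_basis_def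
        lin_ext_fun_add)
  also have "lin_ext (\<lambda>b. iop (F (basis b)) u) x
      = lin_ext (\<lambda>b. lin_ext (\<lambda>w. contract_word (F (basis b)) w) u) x"
    by (simp add: iop_F)
  also have "\<dots> = lin_ext (\<lambda>w. lin_ext (\<lambda>b. contract_word (F (basis b)) w) x) u"
    by (rule lin_ext_swap)
  also have "\<dots> = iF F x u"
    by (simp add: iF_def iop_F contract_word_bilinear_left[OF F, symmetric])
  finally show ?thesis
    by (simp add: tprod_emb_left)
qed

lemma is_Lambda_Lambda_lin:
  assumes F: "bilinear_form F"
  shows "is_Lambda F (Lambda_lin F)"
  unfolding is_Lambda_def
proof (intro conjI allI)
  show "linear_map (Lambda_lin F u)" for u
    using linear_Lambda_word[OF F] unfolding lin_map_def Lambda_lin_def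
    by (simp add: lin_ext_fun_add lin_ext_fun_vsmult)
  show "Lambda_lin F (s + t) u = Lambda_lin F s u + Lambda_lin F t u" for s t u
    by (simp add: Lambda_lin_def lin_ext_add)
  show "Lambda_lin F (vsmult a s) u = vsmult a (Lambda_lin F s u)" for a s u
    by (simp add: Lambda_lin_def lin_ext_vsmult)
  show "Lambda_lin F tone = id"
    by (simp add: Lambda_lin_def fun_eq_iff tone_def lin_ext_single)
qed (simp_all add: Lambda_lin_tprod[OF F] Lambda_lin_emb[OF F])

lemma is_Lambda_unique:
  assumes "is_Lambda F L"
  shows "L = Lambda_lin F"
proof (intro ext)
  fix s u
  have "L (basis w) = Lambda_word F w" for w
  proof (induction w)
    case Nil
    then show ?case using assms by (simp add: is_Lambda_def tone_def[symmetric] fun_eq_iff)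
  next
    case (Cons b w)
    have "L (emb (basis b)) v = tprod (emb (basis b)) v + iF F (basis b) v" for v
      using assms unfolding is_Lambda_def by blast
    then have "L (emb (basis b)) v = Lambda_basis F b v" for v
      by (simp add: Lambda_basis_def emb_basis iF_def)
    moreover have "L (basis (b # w)) = L (emb (basis b)) \<circ> L (basis w)"
      using assms unfolding is_Lambda_def basis_Cons by blast
    ultimately show ?case using Cons by (simp add: fun_eq_iff)
  qed
  moreover have "linear_map (\<lambda>s. L s u)"
    using assms by (simp add: is_Lambda_def lin_map_def)
  ultimately show "L s u = Lambda_lin F s u"
    using linear_map_eq_lin_ext[of "\<lambda>s. L s u" s] by (simp add: Lambda_lin_def)
qed

lemma is_Lambda_LambdaF:
  assumes "bilinear_form F"
  shows "is_Lambda F (LambdaF F)"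
proof -
  have "LambdaF F = (THE L. is_Lambda F L)"
    by (simp add: LambdaF_def is_Lambda_def)
  also have "\<dots> = Lambda_lin F"
    using is_Lambda_Lambda_lin[OF assms] is_Lambda_unique by (rule the_equality)
  finally show ?thesis
    using is_Lambda_Lambda_lin[OF assms] by simp
qed

lemma lambdaF_tens_list_Nil:
  assumes "bilinear_form F"
  shows "lambdaF F (tens_list []) = tone"
  using is_Lambda_LambdaF[OF assms] by (simp add: lambdaF_def tens_list_Nil is_Lambda_def)

lemma lambdaF_tens_list_Cons:
  assumes "bilinear_form F"
  shows "lambdaF F (tens_list (x # xs)) =
    tprod (emb x) (lambdaF F (tens_list xs)) + iop (F x) (lambdaF F (tens_list xs))"
  using is_Lambda_LambdaF[OF assms] by (simp add: lambdaF_def tens_list_Cons is_Lambda_def iF_def)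

section \<open>Signs of permutations via inversions\<close>

fun inversions :: "nat list \<Rightarrow> nat" where
  "inversions [] = 0"
| "inversions (a # xs) = length (filter (\<lambda>b. b < a) xs) + inversions xs"

lemma inversions_swap: "b < a \<Longrightarrow> inversions (xs @ a # b # ys) = Suc (inversions (xs @ b # a # ys))"
  by (induction xs) auto

lemma minus_one_power_inversions_move_to_front:
  assumes "a \<notin> set xs"
  shows "(-1::int) ^ inversions (xs @ a # ys) = (-1) ^ inversions (a # xs @ ys) * (-1) ^ length xs"
proof -
  have "even (inversions (xs @ a # ys) + length xs + inversions (a # xs @ ys))"
    using assms
  proof (induction xs)
    case (Cons x xs)
    then show ?case by (cases "a < x") auto
  qed simp
  then show ?thesis
    by (simp add: minus_one_power_iff) presburger
qed

lemma inversions_map_Suc: "inversions (map Suc xs) = inversions xs"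
  by (induction xs) (simp_all add: filter_map comp_def)

lemma inversions_Cons_Suc_0_map_Suc: "inversions (Suc 0 # map Suc xs) = inversions xs"
  by (simp add: inversions_map_Suc filter_map comp_def)

lemma inversions_sorted: "sorted xs \<Longrightarrow> inversions xs = 0"
  by (induction xs) (auto simp: filter_empty_conv)

lemma not_sorted_adjacent_descent: "\<not> sorted s \<Longrightarrow> \<exists>xs a b ys. s = xs @ a # b # ys \<and> b < a"
proof (induction s)
  case (Cons x s)
  show ?case
  proof (cases "sorted s")
    case False
    then obtain xs a b ys where "s = xs @ a # b # ys" "b < a"
      using Cons.IH by blast
    then show ?thesis by (intro exI[of _ "x # xs"]) auto
  next
    case True
    then obtain c where c: "c \<in> set s" "c < x"
      using Cons.prems by (auto simp: not_le)
    then obtain h t where s: "s = h # t"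
      by (cases s) auto
    have "h \<le> c" using True c s by auto
    then show ?thesis using s c by (intro exI[of _ "[]"]) auto
  qed
qed simp

definition list_perm :: "nat \<Rightarrow> nat list \<Rightarrow> nat \<Rightarrow> nat" where
  "list_perm n s = (\<lambda>l. if 1 \<le> l \<and> l \<le> n then s ! (l - 1) else l)"

lemma list_perm_permutes:
  assumes "distinct s" and "set s = {1..n}"
  shows "list_perm n s permutes {1..n}"
proof (rule bij_imp_permutes)
  have "length s = n"
    using distinct_card[OF assms(1)] assms(2) by simp
  have "bij_betw (\<lambda>l. l - 1) {1..n} {..<n}"
    by (rule bij_betw_byWitness[where f' = Suc]) auto
  moreover have "bij_betw ((!) s) {..<n} {1..n}"
    using bij_betw_nth[OF assms(1)] \<open>length s = n\<close> assms(2) by simp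
  ultimately have "bij_betw ((!) s \<circ> (\<lambda>l. l - 1)) {1..n} {1..n}"
    by (rule bij_betw_trans)
  then show "bij_betw (list_perm n s) {1..n} {1..n}"
    by (rule bij_betw_cong[THEN iffD1, rotated]) (simp add: list_perm_def)
  show "x \<notin> {1..n} \<Longrightarrow> list_perm n s x = x" for x
    by (auto simp: list_perm_def)
qed

lemma list_perm_swap_adjacent:
  assumes "Suc (Suc (length xs)) \<le> n"
  shows "list_perm n (xs @ a # b # ys) =
    list_perm n (xs @ b # a # ys) \<circ> transpose (Suc (length xs)) (Suc (Suc (length xs)))"
proof
  fix l
  show "list_perm n (xs @ a # b # ys) l =
      (list_perm n (xs @ b # a # ys) \<circ> transpose (Suc (length xs)) (Suc (Suc (length xs)))) l"
    using assms unfolding list_perm_def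
    by (cases "l < Suc (length xs)"; cases "l = Suc (length xs)"; cases "l = Suc (Suc (length xs))")
      (auto simp: nth_append transpose_def nth_Cons' split: if_splits)
qed

lemma sign_list_perm:
  "distinct s \<Longrightarrow> set s = {1..n} \<Longrightarrow> sign (list_perm n s) = (-1) ^ inversions s"
proof (induction "inversions s" arbitrary: s rule: less_induct)
  case less
  have len: "length s = n"
    using distinct_card[OF less.prems(1)] less.prems(2) by simp
  show ?case
  proof (cases "sorted s")
    case True
    have "set [1..<n+1] = {1..n}"
      by (simp only: set_upt Suc_eq_plus1[symmetric] atLeastLessThanSuc_atLeastAtMost)
    then have "s = [1..<n+1]"
      using less.prems by (intro sorted_distinct_set_unique[OF True]) (simp_all del: upt_Suc)
    then have "list_perm n s = id"
      by (auto simp: list_perm_def fun_eq_iff simp del: upt_Suc)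
    then show ?thesis using inversions_sorted[OF True] by simp
  next
    case False
    then obtain xs a b ys where s: "s = xs @ a # b # ys" and "b < a"
      using not_sorted_adjacent_descent by blast
    define s' where "s' = xs @ b # a # ys"
    have lt: "Suc (Suc (length xs)) \<le> n"
      using len s by simp
    have inv: "inversions s = Suc (inversions s')"
      using inversions_swap[OF \<open>b < a\<close>] s s'_def by simp
    have s': "distinct s'" "set s' = {1..n}"
      using less.prems s s'_def by auto
    have "sign (list_perm n s) = sign (list_perm n s') * sign (transpose (Suc (length xs)) (Suc (Suc (length xs))))"
      unfolding s list_perm_swap_adjacent[OF lt] s'_def[symmetric]
      by (rule sign_compose[OF permutes_imp_permutation[OF _ list_perm_permutes[OF s']]])
        (simp_all add: permutation_swap_id)
    moreover have "sign (list_perm n s') = (-1) ^ inversions s'"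
      using less.hyps[of s'] inv s' by simp
    ultimately show ?thesis
      using inv by (simp add: sign_swap_id)
  qed
qed

section \<open>Pairings\<close>

lemma filter_neq_nth:
  assumes "distinct xs" and "m < length xs"
  shows "filter (\<lambda>i. i \<noteq> xs ! m) xs = take m xs @ drop (Suc m) xs"
proof -
  have "distinct (take m xs @ xs ! m # drop (Suc m) xs)"
    using assms by (simp flip: id_take_nth_drop)
  then have "filter (\<lambda>i. i \<noteq> xs ! m) (take m xs) = take m xs"
    and "filter (\<lambda>i. i \<noteq> xs ! m) (drop (Suc m) xs) = drop (Suc m) xs"
    by (auto simp: filter_id_conv)
  then show ?thesis
    by (subst id_take_nth_drop[OF assms(2)]) simp
qed

lemma pair_seq_Nil [simp]: "pair_seq [] = []"
  by (simp add: pair_seq_def)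

lemma pair_seq_Cons [simp]: "pair_seq (p # ps) = fst p # snd p # pair_seq ps"
  by (simp add: pair_seq_def split_beta)

lemma set_pair_seq: "set (pair_seq ps) = fst ` set ps \<union> snd ` set ps"
  by (induction ps) auto

lemma length_pair_seq: "length (pair_seq ps) = 2 * length ps"
  by (induction ps) auto

lemma zero_notin_pair_seq_iff: "0 \<notin> set (pair_seq ps) \<longleftrightarrow> (\<forall>p\<in>set ps. fst p \<noteq> 0 \<and> snd p \<noteq> 0)"
  unfolding set_pair_seq by (simp add: image_iff) metis

definition all_pairings :: "nat \<Rightarrow> (nat \<times> nat) list set" where
  "all_pairings n = {ps. distinct (pair_seq ps) \<and> (\<forall>(i,j)\<in>set ps. 1 \<le> i \<and> i < j \<and> j \<le> n) \<and>
      sorted_wrt (<) (map fst ps)}"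

definition unpaired :: "nat \<Rightarrow> (nat \<times> nat) list \<Rightarrow> nat list" where
  "unpaired n ps = filter (\<lambda>m. m \<notin> set (pair_seq ps)) [1..<n+1]"

definition pairing_order :: "nat \<Rightarrow> (nat \<times> nat) list \<Rightarrow> nat list" where
  "pairing_order n ps = pair_seq ps @ unpaired n ps"

definition shift_pairs :: "(nat \<times> nat) list \<Rightarrow> (nat \<times> nat) list" where
  "shift_pairs ps = map (\<lambda>p. (Suc (fst p), Suc (snd p))) ps"

definition pair_with_first :: "nat \<Rightarrow> (nat \<times> nat) list \<Rightarrow> nat \<Rightarrow> (nat \<times> nat) list" where
  "pair_with_first n ps m = (Suc 0, Suc (unpaired n ps ! m)) # shift_pairs ps"

lemma pairings_eq_all_pairings: "pairings n k = {ps \<in> all_pairings n. length ps = k}"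
  by (auto simp: pairings_def all_pairings_def)

lemma pair_perm_eq_list_perm: "pair_perm n ps = list_perm n (pairing_order n ps)"
  by (simp only: pair_perm_def list_perm_def pairing_order_def unpaired_def)

lemma set_upt_one: "set [1..<n+1] = {1..n}"
  by (simp only: set_upt Suc_eq_plus1[symmetric] atLeastLessThanSuc_atLeastAtMost)

lemma upt_one_Suc: "[1..<Suc n + 1] = 1 # map Suc [1..<n+1]"
  by (simp add: map_Suc_upt upt_conv_Cons del: upt_Suc)

lemma pair_seq_shift_pairs: "pair_seq (shift_pairs ps) = map Suc (pair_seq ps)"
  by (induction ps) (auto simp: shift_pairs_def)

lemma pair_seq_pair_with_first:
  "pair_seq (pair_with_first n ps m) = Suc 0 # Suc (unpaired n ps ! m) # map Suc (pair_seq ps)"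
  by (simp add: pair_with_first_def pair_seq_shift_pairs)

lemma inj_shift_pairs: "inj shift_pairs"
  unfolding shift_pairs_def by (rule inj_mapI) (auto simp: inj_def)

lemma set_pair_seq_subset: "ps \<in> all_pairings n \<Longrightarrow> set (pair_seq ps) \<subseteq> {1..n}"
  by (force simp: all_pairings_def set_pair_seq)

lemma zero_notin_pair_seq: "ps \<in> all_pairings n \<Longrightarrow> 0 \<notin> set (pair_seq ps)"
  using set_pair_seq_subset by fastforce

lemma set_unpaired: "set (unpaired n ps) = {1..n} - set (pair_seq ps)"
  by (auto simp: unpaired_def set_upt_one)

lemma distinct_unpaired: "distinct (unpaired n ps)"
  by (simp add: unpaired_def del: upt_Suc)

lemma distinct_pairing_order: "ps \<in> all_pairings n \<Longrightarrow> distinct (pairing_order n ps)"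
  by (auto simp: pairing_order_def all_pairings_def distinct_unpaired set_unpaired)

lemma set_pairing_order: "ps \<in> all_pairings n \<Longrightarrow> set (pairing_order n ps) = {1..n}"
  using set_pair_seq_subset[of ps n] by (auto simp: pairing_order_def set_unpaired)

lemma length_all_pairings:
  assumes "ps \<in> all_pairings n"
  shows "length ps \<le> n div 2"
proof -
  have "2 * length ps = card (set (pair_seq ps))"
    using assms by (simp add: all_pairings_def distinct_card length_pair_seq)
  also have "\<dots> \<le> card {1..n}"
    by (rule card_mono[OF _ set_pair_seq_subset[OF assms]]) simp
  finally show ?thesis by simp
qed

lemma finite_all_pairings: "finite (all_pairings n)"
proof (rule finite_subset)
  show "all_pairings n \<subseteq> {ps. set ps \<subseteq> {1..n} \<times> {1..n} \<and> length ps \<le> n}"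
  proof
    fix ps
    assume ps: "ps \<in> all_pairings n"
    then have "set ps \<subseteq> {1..n} \<times> {1..n}"
      using set_pair_seq_subset[OF ps] by (force simp: set_pair_seq)
    moreover have "length ps \<le> n"
      using length_all_pairings[OF ps] div_le_dividend le_trans by blast
    ultimately show "ps \<in> {ps. set ps \<subseteq> {1..n} \<times> {1..n} \<and> length ps \<le> n}"
      by simp
  qed
  show "finite {ps. set ps \<subseteq> {1..n} \<times> {1..n} \<and> length ps \<le> n}"
    by (rule finite_lists_length_le) simp
qed

lemma all_pairings_0: "all_pairings 0 = {[]}"
  using length_all_pairings[of _ 0] by (auto simp: all_pairings_def)

lemma shift_pairs_in_all_pairings_iff:
  "shift_pairs ps \<in> all_pairings (Suc n) \<and> Suc 0 \<notin> set (pair_seq (shift_pairs ps))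
    \<longleftrightarrow> ps \<in> all_pairings n"
proof -
  have "distinct (pair_seq (shift_pairs ps)) = distinct (pair_seq ps)"
    by (simp add: pair_seq_shift_pairs distinct_map)
  moreover have "sorted_wrt (<) (map fst (shift_pairs ps)) = sorted_wrt (<) (map fst ps)"
    by (simp add: shift_pairs_def sorted_wrt_map)
  moreover have "Suc 0 \<notin> set (pair_seq (shift_pairs ps)) \<longleftrightarrow> (\<forall>p\<in>set ps. fst p \<noteq> 0 \<and> snd p \<noteq> 0)"
    unfolding zero_notin_pair_seq_iff[symmetric] by (auto simp: pair_seq_shift_pairs)
  moreover have "(\<forall>(i,j)\<in>set (shift_pairs ps). 1 \<le> i \<and> i < j \<and> j \<le> Suc n)
      \<longleftrightarrow> (\<forall>p\<in>set ps. fst p < snd p \<and> snd p \<le> n)"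
    by (auto simp: shift_pairs_def)
  ultimately show ?thesis
    unfolding all_pairings_def mem_Collect_eq by (auto simp: split_beta)
qed

lemma ex_shift_pairs: "0 \<notin> set (pair_seq ps) \<Longrightarrow> \<exists>qs. ps = shift_pairs qs"
  by (rule exI[of _ "map (\<lambda>p. (fst p - 1, snd p - 1)) ps"])
    (induction ps, auto simp: shift_pairs_def)

lemma all_pairings_Cons_Suc_0:
  assumes ps: "ps \<in> all_pairings n" and one: "Suc 0 \<in> set (pair_seq ps)"
  shows "\<exists>j qs. ps = (Suc 0, j) # qs"
proof (cases ps)
  case Nil
  then show ?thesis using one by simp
next
  case (Cons p qs)
  obtain a b where p: "p = (a, b)"
    by (cases p)
  have ab: "1 \<le> a" "a < b" and qs: "\<forall>(c,d)\<in>set qs. 1 \<le> c \<and> c < d \<and> a < c"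
    using ps by (auto simp: all_pairings_def Cons p)
  have "a = Suc 0"
  proof (rule ccontr)
    assume "a \<noteq> Suc 0"
    then have "Suc 0 \<in> set (pair_seq qs)"
      using one ab by (auto simp: Cons p)
    then show False
      using qs ab by (force simp: set_pair_seq)
  qed
  then show ?thesis using Cons p by blast
qed

lemma all_pairings_tail: "p # qs \<in> all_pairings n \<Longrightarrow> qs \<in> all_pairings n"
  by (auto simp: all_pairings_def)

lemma pair_with_first_in_all_pairings:
  assumes ps: "ps \<in> all_pairings n" and m: "m < length (unpaired n ps)"
  shows "pair_with_first n ps m \<in> all_pairings (Suc n)"
proof -
  let ?j = "unpaired n ps ! m"
  have j: "1 \<le> ?j" "?j \<le> n" "?j \<notin> set (pair_seq ps)"
    using nth_mem[OF m] by (auto simp: set_unpaired)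
  have sh: "shift_pairs ps \<in> all_pairings (Suc n)"
    using shift_pairs_in_all_pairings_iff ps by blast
  have "\<forall>q\<in>set (shift_pairs ps). Suc 0 < fst q"
    using zero_notin_pair_seq[OF ps] by (auto simp: shift_pairs_def zero_notin_pair_seq_iff)
  moreover have "distinct (Suc 0 # Suc ?j # map Suc (pair_seq ps))"
    using ps j zero_notin_pair_seq[OF ps] by (auto simp: all_pairings_def distinct_map)
  ultimately show ?thesis
    using sh j by (auto simp: all_pairings_def pair_with_first_def pair_seq_shift_pairs)
qed

lemma Suc_0_in_pair_with_first: "Suc 0 \<in> set (pair_seq (pair_with_first n ps m))"
  by (simp add: pair_with_first_def)

lemma all_pairings_Suc:
  "all_pairings (Suc n) = shift_pairs ` all_pairings n \<union>
    (\<Union>ps\<in>all_pairings n. pair_with_first n ps ` {..<length (unpaired n ps)})"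
  (is "_ = ?A \<union> ?B")
proof
  show "?A \<union> ?B \<subseteq> all_pairings (Suc n)"
    using shift_pairs_in_all_pairings_iff pair_with_first_in_all_pairings by blast
  show "all_pairings (Suc n) \<subseteq> ?A \<union> ?B"
  proof
    fix ps'
    assume ps': "ps' \<in> all_pairings (Suc n)"
    show "ps' \<in> ?A \<union> ?B"
    proof (cases "Suc 0 \<in> set (pair_seq ps')")
      case False
      obtain ps where "ps' = shift_pairs ps"
        using ex_shift_pairs zero_notin_pair_seq[OF ps'] by blast
      then show ?thesis
        using shift_pairs_in_all_pairings_iff ps' False by blast
    next
      case True
      then obtain j qs where e: "ps' = (Suc 0, j) # qs"
        using all_pairings_Cons_Suc_0[OF ps'] by blast
      have d: "distinct (Suc 0 # j # pair_seq qs)" and j: "1 < j" "j \<le> Suc n"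
        using ps' e by (auto simp: all_pairings_def)
      obtain ps where qs: "qs = shift_pairs ps"
        using ex_shift_pairs zero_notin_pair_seq[OF ps'] e by fastforce
      have "shift_pairs ps \<in> all_pairings (Suc n)" "Suc 0 \<notin> set (pair_seq (shift_pairs ps))"
        using all_pairings_tail ps' e qs d by auto
      then have ps: "ps \<in> all_pairings n"
        using shift_pairs_in_all_pairings_iff by blast
      have "j - 1 \<in> set (unpaired n ps)"
        using d j by (cases j) (auto simp: set_unpaired qs pair_seq_shift_pairs)
      then obtain m where m: "m < length (unpaired n ps)" "unpaired n ps ! m = j - 1"
        by (metis in_set_conv_nth)
      then have "ps' = pair_with_first n ps m"
        using e qs j by (simp add: pair_with_first_def)
      then show ?thesis using ps m by blast
    qed
  qed
qed

lemma sum_all_pairings_Suc: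
  "(\<Sum>ps\<in>all_pairings (Suc n). g ps) =
    (\<Sum>ps\<in>all_pairings n. g (shift_pairs ps)) +
    (\<Sum>ps\<in>all_pairings n. \<Sum>m<length (unpaired n ps). g (pair_with_first n ps m))"
proof -
  have inj_first: "inj_on (pair_with_first n ps) {..<length (unpaired n ps)}" for ps
    using nth_eq_iff_index_eq[OF distinct_unpaired] by (auto simp: inj_on_def pair_with_first_def)
  have disj: "pair_with_first n ps ` {..<length (unpaired n ps)} \<inter>
      pair_with_first n ps' ` {..<length (unpaired n ps')} = {}" if "ps \<noteq> ps'" for ps ps'
    using that inj_shift_pairs by (auto simp: pair_with_first_def inj_def)
  have shift_neq_first: "shift_pairs ps \<noteq> pair_with_first n ps' m" if "ps \<in> all_pairings n" for ps ps' m
    using that shift_pairs_in_all_pairings_iff Suc_0_in_pair_with_first by metis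
  have "(\<Sum>ps\<in>all_pairings (Suc n). g ps) =
      (\<Sum>ps\<in>shift_pairs ` all_pairings n. g ps) +
      (\<Sum>ps\<in>(\<Union>ps\<in>all_pairings n. pair_with_first n ps ` {..<length (unpaired n ps)}). g ps)"
    unfolding all_pairings_Suc
    by (intro sum.union_disjoint) (auto simp: finite_all_pairings shift_neq_first)
  also have "\<dots> = (\<Sum>ps\<in>all_pairings n. g (shift_pairs ps)) +
      (\<Sum>ps\<in>all_pairings n. \<Sum>q\<in>pair_with_first n ps ` {..<length (unpaired n ps)}. g q)"
    using inj_on_subset[OF inj_shift_pairs] disj
    by (simp add: sum.reindex sum.UNION_disjoint_family finite_all_pairings disjoint_family_on_def)
  also have "\<dots> = (\<Sum>ps\<in>all_pairings n. g (shift_pairs ps)) +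
      (\<Sum>ps\<in>all_pairings n. \<Sum>m<length (unpaired n ps). g (pair_with_first n ps m))"
    by (simp add: sum.reindex[OF inj_first])
  finally show ?thesis .
qed

lemma unpaired_shift_pairs:
  assumes "ps \<in> all_pairings n"
  shows "unpaired (Suc n) (shift_pairs ps) = Suc 0 # map Suc (unpaired n ps)"
proof -
  have "unpaired (Suc n) (shift_pairs ps) =
      filter (\<lambda>m. m \<notin> set (map Suc (pair_seq ps))) (1 # map Suc [1..<n+1])"
    unfolding unpaired_def upt_one_Suc pair_seq_shift_pairs ..
  also have "\<dots> = Suc 0 # map Suc (unpaired n ps)"
    using zero_notin_pair_seq[OF assms]
    by (simp add: filter_map comp_def unpaired_def inj_image_mem_iff del: upt_Suc)
  finally show ?thesis .
qed

lemma unpaired_pair_with_first: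
  assumes "m < length (unpaired n ps)"
  shows "unpaired (Suc n) (pair_with_first n ps m) =
    map Suc (take m (unpaired n ps) @ drop (Suc m) (unpaired n ps))"
proof -
  let ?j = "unpaired n ps ! m"
  have "unpaired (Suc n) (pair_with_first n ps m) =
      filter (\<lambda>i. i \<notin> set (Suc 0 # Suc ?j # map Suc (pair_seq ps))) (1 # map Suc [1..<n+1])"
    unfolding unpaired_def upt_one_Suc pair_seq_pair_with_first ..
  also have "\<dots> = map Suc (filter (\<lambda>i. Suc i \<notin> set (Suc 0 # Suc ?j # map Suc (pair_seq ps))) [1..<n+1])"
    by (simp add: filter_map comp_def del: upt_Suc)
  also have "filter (\<lambda>i. Suc i \<notin> set (Suc 0 # Suc ?j # map Suc (pair_seq ps))) [1..<n+1] =
      filter (\<lambda>i. i \<notin> set (pair_seq ps) \<and> i \<noteq> ?j) [1..<n+1]"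
    by (rule filter_cong) (auto simp del: upt_Suc)
  also have "\<dots> = filter (\<lambda>i. i \<noteq> ?j) (unpaired n ps)"
    by (simp add: unpaired_def del: upt_Suc)
  also have "\<dots> = take m (unpaired n ps) @ drop (Suc m) (unpaired n ps)"
    by (rule filter_neq_nth[OF distinct_unpaired assms])
  finally show ?thesis .
qed

lemma minus_one_power_inversions_shift_pairs:
  assumes ps: "ps \<in> all_pairings n"
  shows "(-1::int) ^ inversions (pairing_order (Suc n) (shift_pairs ps)) =
    (-1) ^ inversions (pairing_order n ps)"
proof -
  have "Suc 0 \<notin> set (map Suc (pair_seq ps))"
    using zero_notin_pair_seq[OF ps] by auto
  then have "(-1::int) ^ inversions (map Suc (pair_seq ps) @ Suc 0 # map Suc (unpaired n ps)) =
      (-1) ^ inversions (Suc 0 # map Suc (pair_seq ps) @ map Suc (unpaired n ps)) * (-1) ^ (2 * length ps)"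
    by (simp add: minus_one_power_inversions_move_to_front length_pair_seq del: inversions.simps)
  then show ?thesis
    by (simp add: pairing_order_def unpaired_shift_pairs[OF ps] pair_seq_shift_pairs
        inversions_Cons_Suc_0_map_Suc inversions_map_Suc flip: map_append)
qed

lemma minus_one_power_inversions_pair_with_first:
  assumes ps: "ps \<in> all_pairings n" and m: "m < length (unpaired n ps)"
  shows "(-1::int) ^ inversions (pairing_order (Suc n) (pair_with_first n ps m)) =
    (-1) ^ inversions (pairing_order n ps) * (-1) ^ m"
proof -
  let ?r = "unpaired n ps"
  let ?j = "?r ! m"
  let ?xs = "pair_seq ps @ take m ?r"
  have order_Suc: "pairing_order (Suc n) (pair_with_first n ps m) =
      Suc 0 # map Suc (?j # ?xs @ drop (Suc m) ?r)"
    by (simp add: pairing_order_def unpaired_pair_with_first[OF m] pair_seq_pair_with_first)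
  have "?j \<in> set (drop m ?r)"
    using m by (simp flip: Cons_nth_drop_Suc)
  then have "?j \<notin> set (take m ?r)"
    using set_take_disj_set_drop_if_distinct[OF distinct_unpaired order_refl] by blast
  moreover have "?j \<notin> set (pair_seq ps)"
    using nth_mem[OF m] by (simp add: set_unpaired)
  ultimately have j: "?j \<notin> set ?xs"
    by simp
  have "(-1::int) ^ inversions (pairing_order n ps) = (-1) ^ inversions (?xs @ ?j # drop (Suc m) ?r)"
    by (simp add: pairing_order_def id_take_nth_drop[OF m, symmetric])
  also have "\<dots> = (-1) ^ inversions (?j # ?xs @ drop (Suc m) ?r) * (-1) ^ length ?xs"
    using j by (rule minus_one_power_inversions_move_to_front)
  also have "inversions (?j # ?xs @ drop (Suc m) ?r) =
      inversions (pairing_order (Suc n) (pair_with_first n ps m))"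
    unfolding order_Suc inversions_Cons_Suc_0_map_Suc ..
  also have "(-1::int) ^ length ?xs = (-1) ^ m"
    using m by (simp add: length_pair_seq power_add)
  finally show ?thesis
    by (simp add: mult.assoc)
qed

section \<open>The expansion of \<open>\<lambda>\<^sub>F\<close> over pairings\<close>

definition pair_prod ::
    "('b,'k::field) bform \<Rightarrow> (nat \<Rightarrow> ('b,'k) vec) \<Rightarrow> (nat \<times> nat) list \<Rightarrow> 'k" where
  "pair_prod F x ps = (\<Prod>l<length ps. F (x (fst (ps ! l))) (x (snd (ps ! l))))"

definition pairing_coeff ::
    "('b,'k::field) bform \<Rightarrow> nat \<Rightarrow> (nat \<Rightarrow> ('b,'k) vec) \<Rightarrow> (nat \<times> nat) list \<Rightarrow> 'k" where
  "pairing_coeff F n x ps = of_int ((-1) ^ inversions (pairing_order n ps)) * pair_prod F x ps"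

definition pairing_term ::
    "('b,'k::field) bform \<Rightarrow> nat \<Rightarrow> (nat \<Rightarrow> ('b,'k) vec) \<Rightarrow> (nat \<times> nat) list \<Rightarrow> ('b,'k) tens" where
  "pairing_term F n x ps = vsmult (pairing_coeff F n x ps) (tens_list (map x (unpaired n ps)))"

lemma pair_prod_Cons: "pair_prod F x (p # ps) = F (x (fst p)) (x (snd p)) * pair_prod F x ps"
  by (simp add: pair_prod_def prod.lessThan_Suc_shift del: prod.lessThan_Suc)

lemma pair_prod_shift_pairs: "pair_prod F x (shift_pairs ps) = pair_prod F (x \<circ> Suc) ps"
  unfolding pair_prod_def by (rule prod.cong) (auto simp: shift_pairs_def)

lemma pairing_coeff_shift_pairs:
  assumes "ps \<in> all_pairings n"
  shows "pairing_coeff F (Suc n) x (shift_pairs ps) = pairing_coeff F n (x \<circ> Suc) ps"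
  by (simp add: pairing_coeff_def minus_one_power_inversions_shift_pairs[OF assms] pair_prod_shift_pairs)

lemma pairing_coeff_pair_with_first:
  assumes ps: "ps \<in> all_pairings n" and m: "m < length (unpaired n ps)"
  shows "pairing_coeff F (Suc n) x (pair_with_first n ps m) =
    pairing_coeff F n (x \<circ> Suc) ps * ((-1) ^ m * F (x (Suc 0)) (x (Suc (unpaired n ps ! m))))"
proof -
  have "pair_prod F x (pair_with_first n ps m) =
      F (x (Suc 0)) (x (Suc (unpaired n ps ! m))) * pair_prod F (x \<circ> Suc) ps"
    by (simp add: pair_with_first_def pair_prod_Cons pair_prod_shift_pairs)
  then show ?thesis
    by (simp add: pairing_coeff_def minus_one_power_inversions_pair_with_first[OF ps m] mult_ac)
qed

lemma iop_pairing_term: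
  assumes F: "bilinear_form F" and ps: "ps \<in> all_pairings n"
  shows "iop (F (x (Suc 0))) (pairing_term F n (x \<circ> Suc) ps) =
    (\<Sum>m<length (unpaired n ps). pairing_term F (Suc n) x (pair_with_first n ps m))"
proof -
  let ?f = "F (x (Suc 0))" and ?ys = "map (x \<circ> Suc) (unpaired n ps)"
  have f: "linear_functional ?f"
    by (rule bilinear_form_linear_right[OF F])
  have "iop ?f (pairing_term F n (x \<circ> Suc) ps) =
      (\<Sum>m<length ?ys. vsmult (pairing_coeff F n (x \<circ> Suc) ps * ((-1) ^ m * ?f (?ys ! m)))
        (tens_list (take m ?ys @ drop (Suc m) ?ys)))"
    using linear_iop[OF f] unfolding pairing_term_def lin_map_def
    by (simp add: iop_tens_list[OF f] vsmult_sum_right)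
  also have "\<dots> = (\<Sum>m<length (unpaired n ps). pairing_term F (Suc n) x (pair_with_first n ps m))"
    by (rule sum.cong)
      (simp_all add: pairing_term_def pairing_coeff_pair_with_first[OF ps] unpaired_pair_with_first
        take_map drop_map)
  finally show ?thesis .
qed

lemma lambdaF_tens_list_eq_sum_pairing_term:
  assumes F: "bilinear_form F"
  shows "lambdaF F (tens_list (map x [1..<n+1])) = (\<Sum>ps\<in>all_pairings n. pairing_term F n x ps)"
proof (induction n arbitrary: x)
  case 0
  show ?case
    using lambdaF_tens_list_Nil[OF F]
    by (simp add: all_pairings_0 pairing_term_def pairing_coeff_def pair_prod_def pairing_order_def
        unpaired_def tens_list_Nil)
next
  case (Suc n)
  let ?x1 = "x (Suc 0)"
  let ?rest = "\<Sum>ps\<in>all_pairings n. pairing_term F n (x \<circ> Suc) ps"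
  have "map x [1..<Suc n + 1] = ?x1 # map (x \<circ> Suc) [1..<n+1]"
    unfolding upt_one_Suc by simp
  then have "lambdaF F (tens_list (map x [1..<Suc n + 1])) = tprod (emb ?x1) ?rest + iop (F ?x1) ?rest"
    by (simp only: lambdaF_tens_list_Cons[OF F] Suc.IH)
  also have "tprod (emb ?x1) ?rest = (\<Sum>ps\<in>all_pairings n. pairing_term F (Suc n) x (shift_pairs ps))"
    unfolding tprod_sum_right
    by (rule sum.cong) (simp_all add: pairing_term_def tprod_vsmult_right tens_list_Cons
        pairing_coeff_shift_pairs unpaired_shift_pairs)
  also have "iop (F ?x1) ?rest =
      (\<Sum>ps\<in>all_pairings n. \<Sum>m<length (unpaired n ps). pairing_term F (Suc n) x (pair_with_first n ps m))"
    unfolding lin_map_sum[OF linear_iop[OF bilinear_form_linear_right[OF F]]]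
    by (rule sum.cong) (simp_all add: iop_pairing_term[OF F])
  finally show ?case
    by (simp add: sum_all_pairings_Suc)
qed

lemma pairing_term_Nil: "pairing_term F n x [] = tens_list (map x [1..<n+1])"
proof -
  have "pairing_order n [] = [1..<n+1]" "unpaired n [] = [1..<n+1]"
    by (simp_all add: pairing_order_def unpaired_def del: upt_Suc)
  then show ?thesis
    by (simp add: pairing_term_def pairing_coeff_def pair_prod_def inversions_sorted del: upt_Suc)
qed

lemma pairing_coeff_eq_sign:
  assumes "ps \<in> all_pairings n"
  shows "pairing_coeff F n x ps =
    of_int (sign (pair_perm n ps)) * (\<Prod>l<length ps. F (x (fst (ps ! l))) (x (snd (ps ! l))))"
  using sign_list_perm[OF distinct_pairing_order[OF assms] set_pairing_order[OF assms]]
  by (simp add: pairing_coeff_def pair_prod_def pair_perm_eq_list_perm)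

lemma sum_all_pairings_by_length:
  "(\<Sum>ps\<in>all_pairings n. g ps) = g [] + (\<Sum>k\<in>{1..n div 2}. \<Sum>ps\<in>pairings n k. g ps)"
proof -
  have split: "all_pairings n - {[]} = (\<Union>k\<in>{1..n div 2}. pairings n k)"
    using length_all_pairings[of _ n] by (auto simp: pairings_eq_all_pairings Suc_le_eq)
  have "[] \<in> all_pairings n"
    by (simp add: all_pairings_def)
  then have "(\<Sum>ps\<in>all_pairings n. g ps) = g [] + (\<Sum>ps\<in>all_pairings n - {[]}. g ps)"
    by (rule sum.remove[OF finite_all_pairings])
  also have "(\<Sum>ps\<in>all_pairings n - {[]}. g ps) = (\<Sum>k\<in>{1..n div 2}. \<Sum>ps\<in>pairings n k. g ps)"
    unfolding split
    by (rule sum.UNION_disjoint) (auto simp: pairings_eq_all_pairings intro: finite_subset[OF _ finite_all_pairings])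
  finally show ?thesis .
qed

theorem mainTheorem5:
  fixes F :: "('b,'k::field) vec \<Rightarrow> ('b,'k) vec \<Rightarrow> 'k"
    and p :: nat and x :: "nat \<Rightarrow> ('b,'k) vec"
  assumes "bilinear_form F" and "p \<ge> 2"
  shows "lambdaF F (tens_list (List.map x [1..<p+1])) =
     tens_list (List.map x [1..<p+1]) +
     (\<Sum>k\<in>{1..p div 2}. \<Sum>ps\<in>pairings p k.
        vsmult (of_int (sign (pair_perm p ps)) *
                (\<Prod>l<k. F (x (fst (ps ! l))) (x (snd (ps ! l)))))
          (tens_list (List.map x (filter (\<lambda>m. m \<notin> set (pair_seq ps)) [1..<p+1]))))"
proof -
  have "lambdaF F (tens_list (map x [1..<p+1])) = (\<Sum>ps\<in>all_pairings p. pairing_term F p x ps)"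
    by (rule lambdaF_tens_list_eq_sum_pairing_term[OF assms(1)])
  also have "\<dots> = tens_list (map x [1..<p+1]) +
      (\<Sum>k\<in>{1..p div 2}. \<Sum>ps\<in>pairings p k. pairing_term F p x ps)"
    by (simp add: sum_all_pairings_by_length pairing_term_Nil del: upt_Suc)
  also have "(\<Sum>k\<in>{1..p div 2}. \<Sum>ps\<in>pairings p k. pairing_term F p x ps) =
      (\<Sum>k\<in>{1..p div 2}. \<Sum>ps\<in>pairings p k.
        vsmult (of_int (sign (pair_perm p ps)) * (\<Prod>l<k. F (x (fst (ps ! l))) (x (snd (ps ! l)))))
          (tens_list (map x (filter (\<lambda>m. m \<notin> set (pair_seq ps)) [1..<p+1]))))"
    by (intro sum.cong refl)
      (auto simp: pairings_eq_all_pairings pairing_term_def pairing_coeff_eq_sign unpaired_def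
        simp del: upt_Suc)
  finally show ?thesis .
qed

end
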